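(* Let $X$ be an arbitrary set, let $\mathcal{P}=\{X_i \mid i\in I\}$ be a partition of $X$, and let $f\in T(X,\mathcal{P})$. Then the following statements are equivalent: (i) $f\in \Sigma(X,\mathcal{P})$; (ii) the character $\chi^{(f)}\colon I\to I$ is surjective; (iii) $f\in S_{\mathcal{P}}(X)$ and $Af^{-1}\neq\emptyset$ for every nonempty open set $A\subseteq X$ (open with respect to the topology on $X$ having $\mathcal{P}$ as a basis).
   Context: Maps are written on the right: $xf$ is the image of $x$, and $Af=\{af\mid a\in A\}$, $Af^{-1}=\{x\in X\mid xf\in A\}$. $\mathcal{T}_X$ is the semigroup of all maps $X\to X$. For a partition $\mathcal{P}=\{X_i\mid i\in I\}$ of $X$ (distinct indices correspond to distinct blocks), $T(X,\mathcal{P})=\{f\in\mathcal{T}_X \mid \forall i\in I\ \exists j\in I:\ X_if\subseteq X_j\}$ and $\Sigma(X,\mathcal{P})=\{f\in T(X,\mathcal{P})\mid Xf\cap X_i\neq\emptyset \text{ for all } i\in I\}$. For $f\in T(X,\mathcal{P})$, the character of $f$ is the map $\chi^{(f)}\colon I\to I$ defined by $i\chi^{(f)}=j$ whenever $X_if\subseteq X_j$. The topology on $X$ having $\mathcal{P}$ as a basis is the one whose open sets are exactly the unions of blocks of $\mathcal{P}$; $S_{\mathcal{P}}(X)$ denotes the set of all continuous maps $X\to X$ for this topology. *)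

theory Defs
  imports "HOL-Analysis.Analysis"
begin

definition is_partition :: "'a set \<Rightarrow> 'i set \<Rightarrow> ('i \<Rightarrow> 'a set) \<Rightarrow> bool" where
  "is_partition X I P \<longleftrightarrow>
     (\<forall>i\<in>I. P i \<noteq> {}) \<and>
     (\<forall>i\<in>I. \<forall>j\<in>I. i \<noteq> j \<longrightarrow> P i \<inter> P j = {}) \<and>
     \<Union>(P ` I) = X"

definition TXP :: "'a set \<Rightarrow> 'i set \<Rightarrow> ('i \<Rightarrow> 'a set) \<Rightarrow> ('a \<Rightarrow> 'a) set" where
  "TXP X I P = {f. f \<in> X \<rightarrow> X \<and> (\<forall>i\<in>I. \<exists>j\<in>I. f ` P i \<subseteq> P j)}"

definition SigmaXP :: "'a set \<Rightarrow> 'i set \<Rightarrow> ('i \<Rightarrow> 'a set) \<Rightarrow> ('a \<Rightarrow> 'a) set" where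
  "SigmaXP X I P = {f \<in> TXP X I P. \<forall>i\<in>I. f ` X \<inter> P i \<noteq> {}}"

definition character :: "'i set \<Rightarrow> ('i \<Rightarrow> 'a set) \<Rightarrow> ('a \<Rightarrow> 'a) \<Rightarrow> 'i \<Rightarrow> 'i" where
  "character I P f i = (THE j. j \<in> I \<and> f ` P i \<subseteq> P j)"

definition part_topology :: "'i set \<Rightarrow> ('i \<Rightarrow> 'a set) \<Rightarrow> 'a topology" where
  "part_topology I P = topology_generated_by (P ` I)"

end

theory Submission
  imports Defs
begin

text \<open>A map in T(X,P) sends each block into a single block, so the preimage of a union of
blocks is again a union of blocks: all such maps are continuous. Each of the three conditions
then says that f(X) meets every block: a block X_j is met iff it contains some f(X_i), i.e. iff
j is a value of the character; and the blocks are open, while every nonempty open set contains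
a block.\<close>

lemma partition_block_subset:
  assumes "is_partition X I P" and "i \<in> I"
  shows "P i \<subseteq> X"
  using assms unfolding is_partition_def by auto

lemma partition_block_nonempty:
  assumes "is_partition X I P" and "i \<in> I"
  shows "P i \<noteq> {}"
  using assms unfolding is_partition_def by blast

lemma partition_block_unique:
  assumes "is_partition X I P" and "i \<in> I" "j \<in> I" and "x \<in> P i" "x \<in> P j"
  shows "i = j"
  using assms unfolding is_partition_def by blast

lemma partition_obtain_block:
  assumes "is_partition X I P" and "x \<in> X"
  obtains i where "i \<in> I" "x \<in> P i"
  using assms unfolding is_partition_def by blast

lemma topspace_part_topology:
  assumes "is_partition X I P"
  shows "topspace (part_topology I P) = X"
  using assms unfolding part_topology_def is_partition_def by simp

lemma openin_part_topology_block:
  assumes "i \<in> I"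
  shows "openin (part_topology I P) (P i)"
  unfolding part_topology_def using assms by (intro topology_generated_by_Basis) auto

lemma openin_part_topology_saturated:
  assumes part: "is_partition X I P" and "openin (part_topology I P) U"
  shows "U \<subseteq> X \<and> (\<forall>j\<in>I. P j \<inter> U \<noteq> {} \<longrightarrow> P j \<subseteq> U)"
proof -
  have "generate_topology_on (P ` I) U"
    using assms(2) unfolding part_topology_def by (simp add: openin_topology_generated_by_iff)
  then show ?thesis
  proof (induction rule: generate_topology_on.induct)
    case Empty
    show ?case by simp
  next
    case (Int a b)
    then show ?case by blast
  next
    case (UN K)
    then show ?case by blast
  next
    case (Basis s)
    then obtain i where "i \<in> I" "s = P i" by auto
    then show ?case
      using partition_block_subset[OF part] partition_block_unique[OF part] by blast
  qed
qed

lemma openin_part_topology_iff: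
  assumes part: "is_partition X I P"
  shows "openin (part_topology I P) U \<longleftrightarrow> U \<subseteq> X \<and> (\<forall>j\<in>I. P j \<inter> U \<noteq> {} \<longrightarrow> P j \<subseteq> U)"
proof
  assume "U \<subseteq> X \<and> (\<forall>j\<in>I. P j \<inter> U \<noteq> {} \<longrightarrow> P j \<subseteq> U)"
  then have "U = \<Union>(P ` {j \<in> I. P j \<subseteq> U})"
    by (blast elim: partition_obtain_block[OF part])
  also have "openin (part_topology I P) \<dots>"
    by (intro openin_Union) (auto intro: openin_part_topology_block)
  finally show "openin (part_topology I P) U" .
qed (rule openin_part_topology_saturated[OF part])

lemma character_maps_block:
  assumes part: "is_partition X I P" and "f \<in> TXP X I P" and i: "i \<in> I"
  shows "character I P f i \<in> I \<and> f ` P i \<subseteq> P (character I P f i)"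
proof -
  obtain j where j: "j \<in> I" "f ` P i \<subseteq> P j"
    using assms(2) i unfolding TXP_def by blast
  obtain x where x: "x \<in> P i"
    using partition_block_nonempty[OF part i] by blast
  have "k = j" if "k \<in> I" "f ` P i \<subseteq> P k" for k
    using partition_block_unique[OF part that(1) j(1)] x that(2) j(2) by blast
  then have "character I P f i = j"
    unfolding character_def using j by (intro the_equality) blast+
  then show ?thesis
    using j by simp
qed

lemma character_eqI:
  assumes part: "is_partition X I P" and "f \<in> TXP X I P"
    and "i \<in> I" "j \<in> I" "x \<in> P i" "f x \<in> P j"
  shows "character I P f i = j"
  using character_maps_block[OF part assms(2,3)] partition_block_unique[OF part] assms(3-6)
  by blast

lemma character_image_eq_iff:
  assumes part: "is_partition X I P" and f: "f \<in> TXP X I P"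
  shows "character I P f ` I = I \<longleftrightarrow> (\<forall>j\<in>I. f ` X \<inter> P j \<noteq> {})"
proof
  assume surj: "character I P f ` I = I"
  show "\<forall>j\<in>I. f ` X \<inter> P j \<noteq> {}"
  proof
    fix j assume "j \<in> I"
    then obtain i where i: "i \<in> I" "character I P f i = j"
      using surj by force
    then obtain x where "x \<in> P i"
      using partition_block_nonempty[OF part] by blast
    then show "f ` X \<inter> P j \<noteq> {}"
      using character_maps_block[OF part f i(1)] partition_block_subset[OF part i(1)] i(2)
      by blast
  qed
next
  assume hit: "\<forall>j\<in>I. f ` X \<inter> P j \<noteq> {}"
  have "I \<subseteq> character I P f ` I"
  proof
    fix j assume j: "j \<in> I"
    then obtain x where x: "x \<in> X" "f x \<in> P j"
      using hit by blast
    obtain i where "i \<in> I" "x \<in> P i"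
      by (rule partition_obtain_block[OF part x(1)])
    then show "j \<in> character I P f ` I"
      using character_eqI[OF part f _ j _ x(2)] by blast
  qed
  then show "character I P f ` I = I"
    using character_maps_block[OF part f] by blast
qed

lemma continuous_map_part_topology:
  assumes part: "is_partition X I P" and f: "f \<in> TXP X I P"
  shows "continuous_map (part_topology I P) (part_topology I P) f"
  unfolding continuous_map_def topspace_part_topology[OF part]
proof (intro conjI allI impI)
  show "f \<in> X \<rightarrow> X"
    using f unfolding TXP_def by blast
  fix U assume "openin (part_topology I P) U"
  then have U: "\<forall>j\<in>I. P j \<inter> U \<noteq> {} \<longrightarrow> P j \<subseteq> U"
    using openin_part_topology_iff[OF part] by blast
  have "P i \<subseteq> {x \<in> X. f x \<in> U}" if "i \<in> I" "P i \<inter> {x \<in> X. f x \<in> U} \<noteq> {}" for i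
    using that character_maps_block[OF part f that(1)] U partition_block_subset[OF part that(1)]
    by blast
  then show "openin (part_topology I P) {x \<in> X. f x \<in> U}"
    using openin_part_topology_iff[OF part] by blast
qed

lemma open_preimages_nonempty_iff:
  assumes part: "is_partition X I P"
  shows "(\<forall>A. openin (part_topology I P) A \<and> A \<noteq> {} \<longrightarrow> {x \<in> X. f x \<in> A} \<noteq> {})
     \<longleftrightarrow> (\<forall>j\<in>I. f ` X \<inter> P j \<noteq> {})"
proof
  assume hyp: "\<forall>A. openin (part_topology I P) A \<and> A \<noteq> {} \<longrightarrow> {x \<in> X. f x \<in> A} \<noteq> {}"
  show "\<forall>j\<in>I. f ` X \<inter> P j \<noteq> {}"
  proof
    fix j assume j: "j \<in> I"
    then have "{x \<in> X. f x \<in> P j} \<noteq> {}"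
      using hyp openin_part_topology_block[OF j] partition_block_nonempty[OF part j] by blast
    then show "f ` X \<inter> P j \<noteq> {}"
      by blast
  qed
next
  assume hit: "\<forall>j\<in>I. f ` X \<inter> P j \<noteq> {}"
  show "\<forall>A. openin (part_topology I P) A \<and> A \<noteq> {} \<longrightarrow> {x \<in> X. f x \<in> A} \<noteq> {}"
  proof (intro allI impI)
    fix A assume A: "openin (part_topology I P) A \<and> A \<noteq> {}"
    then have sat: "A \<subseteq> X" "\<forall>j\<in>I. P j \<inter> A \<noteq> {} \<longrightarrow> P j \<subseteq> A"
      using openin_part_topology_saturated[OF part] by simp_all
    obtain a where a: "a \<in> A"
      using A by blast
    obtain j where j: "j \<in> I" "a \<in> P j"
      using partition_obtain_block[OF part] sat(1) a by blast
    then have "P j \<subseteq> A"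
      using sat(2) a by blast
    then show "{x \<in> X. f x \<in> A} \<noteq> {}"
      using hit j(1) by blast
  qed
qed

theorem theorem3p2:
  fixes X :: "'a set" and I :: "'i set" and P :: "'i \<Rightarrow> 'a set" and f :: "'a \<Rightarrow> 'a"
  assumes "is_partition X I P"
    and "f \<in> TXP X I P"
  shows "(f \<in> SigmaXP X I P \<longleftrightarrow> character I P f ` I = I)
       \<and> (character I P f ` I = I \<longleftrightarrow>
            (continuous_map (part_topology I P) (part_topology I P) f \<and>
             (\<forall>A. openin (part_topology I P) A \<and> A \<noteq> {} \<longrightarrow> {x \<in> X. f x \<in> A} \<noteq> {})))"
proof -
  have "f \<in> SigmaXP X I P \<longleftrightarrow> (\<forall>j\<in>I. f ` X \<inter> P j \<noteq> {})"
    using assms(2) unfolding SigmaXP_def by blast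
  then show ?thesis
    using continuous_map_part_topology[OF assms]
    by (simp only: character_image_eq_iff[OF assms] open_preimages_nonempty_iff[OF assms(1)]
        simp_thms)
qed

end
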